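(* Let $N,d\in\mathbb{N}^+$, let $\Gamma\in\mathbb{R}^{N\times N}$ be symmetric positive semidefinite, $\Sigma\in\mathbb{R}^{d\times d}$ symmetric positive semidefinite, and $\mu\in\mathbb{R}^{dN}$. Fix $t\in(0,T]$ and a vector $v_t\in\mathbb{R}^{dN}$. Let $\alpha_t=e^{-t/2}$, $\sigma_t=\sqrt{1-e^{-t}}$, and $$\nabla\log p_t(v_t)=-\big(\alpha_t^2(\Gamma\otimes\Sigma)+\sigma_t^2 I\big)^{-1}(v_t-\alpha_t\mu).$$ Given an error tolerance $\epsilon\in(0,1)$ and any integer $J<N$, define $\bar\Gamma\in\mathbb{R}^{N\times N}$ by $\bar\Gamma_{ij}=\Gamma_{ij}\,\mathbf{1}\{|i-j|<J\}$ and assume $\bar\Gamma$ is positive semidefinite. Consider the gradient descent iteration $$s^{(k+1)}=s^{(k)}-\eta_t\Big(\big(\alpha_t^2(\bar\Gamma\otimes\Sigma)+\sigma_t^2 I\big)s^{(k)}+(v_t-\alpha_t\mu)\Big),\qquad s^{(0)}=0 .$$ Then with a suitable step size $\eta_t$, after $K=O\big(\kappa_t\log(1/\epsilon)\big)$ iterations, $$\big\|s^{(K)}(v_t)-\nabla\log p_t(v_t)\big\|_2\le \frac{1}{\sigma_t^2}\|v_t-\alpha_t\mu\|_2\,\epsilon+\frac{\|\Sigma\|_{\rm F}\,\|v_t-\alpha_t\mu\|_2}{\sigma_t^4}\sqrt{\sum_{|i-j|\ge J}\Gamma_{ij}^2},$$ where $\kappa_t=\kappa\big(\alpha_t^2(\bar\Gamma\otimes\Sigma)+\sigma_t^2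 I\big)$.
   Context: $\otimes$ denotes the Kronecker product and $I$ the identity of size $dN$. For a positive definite matrix $A$, $\kappa(A)=\lambda_{\max}(A)/\lambda_{\min}(A)$ is its condition number. $\|\cdot\|_{\rm F}$ is the Frobenius norm. The vector $-\big(\alpha_t^2(\Gamma\otimes\Sigma)+\sigma_t^2 I\big)^{-1}(v-\alpha_t\mu)$ is the score (gradient of the log-density) of the Gaussian distribution $N(\alpha_t\mu,\alpha_t^2\Gamma\otimes\Sigma+\sigma_t^2 I)$, which is the law at diffusion time $t$ of the Ornstein–Uhlenbeck forward process $dX_t=-\tfrac12X_tdt+dW_t$ started from $N(\mu,\Gamma\otimes\Sigma)$. *)

theory Defs
  imports "HOL-Analysis.Analysis" "Jordan_Normal_Form.Char_Poly"
    "Jordan_Normal_Form.Gauss_Jordan_Elimination"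
begin

text \<open>Kronecker product A \<otimes> B of two matrices (row index i = i1 * rows B + i2).\<close>
definition kron_mat :: "real mat \<Rightarrow> real mat \<Rightarrow> real mat" where
  "kron_mat A B = mat (dim_row A * dim_row B) (dim_col A * dim_col B)
     (\<lambda>(i, j). A $$ (i div dim_row B, j div dim_col B) * B $$ (i mod dim_row B, j mod dim_col B))"

definition psd_mat :: "nat \<Rightarrow> real mat \<Rightarrow> bool" where
  "psd_mat n A \<longleftrightarrow> A \<in> carrier_mat n n \<and> transpose_mat A = A \<and>
     (\<forall>x \<in> carrier_vec n. x \<bullet> (A *\<^sub>v x) \<ge> 0)"

definition mat_inv :: "real mat \<Rightarrow> real mat" where
  "mat_inv A = the (mat_inverse A)"

definition cond_num :: "real mat \<Rightarrow> real" where
  "cond_num A = Max {l. eigenvalue A l} / Min {l. eigenvalue A l}"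

definition vnorm :: "real vec \<Rightarrow> real" where
  "vnorm x = sqrt (x \<bullet> x)"

definition frob_norm :: "real mat \<Rightarrow> real" where
  "frob_norm A = sqrt (\<Sum>i<dim_row A. \<Sum>j<dim_col A. (A $$ (i, j))\<^sup>2)"

definition band_mat :: "real mat \<Rightarrow> int \<Rightarrow> real mat" where
  "band_mat G J = mat (dim_row G) (dim_col G)
     (\<lambda>(i, j). if \<bar>int i - int j\<bar> < J then G $$ (i, j) else 0)"

primrec gd_iter :: "real mat \<Rightarrow> real vec \<Rightarrow> real \<Rightarrow> nat \<Rightarrow> real vec" where
  "gd_iter A r eta 0 = 0\<^sub>v (dim_vec r)"
| "gd_iter A r eta (Suc k) = gd_iter A r eta k - eta \<cdot>\<^sub>v (A *\<^sub>v gd_iter A r eta k + r)"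

end

theory Submission
  imports Defs
begin

text \<open>Both A = \<alpha>^2 (\<Gamma> \<otimes> \<Sigma>) + \<sigma>^2 I and its banded counterpart
  B = \<alpha>^2 (\<Gamma>_J \<otimes> \<Sigma>) + \<sigma>^2 I dominate \<sigma>^2 I, because Kronecker products of
  positive semidefinite matrices are positive semidefinite (write \<Sigma> as a sum of rank-one
  terms by symmetric elimination). With step size 1 / \<lambda>max(B), every gradient step
  contracts the squared distance to the solution y of B y = -r by the factor 1 - 1/\<kappa>, so
  2 \<kappa> ln(1/\<epsilon>) steps reach distance \<epsilon> |y| \<le> \<epsilon> |r| / \<sigma>^2. The score z solves
  A z = -r, hence A (y - z) = (A - B) y and
  \<sigma>^2 |y - z| \<le> |A - B|_F |y| \<le> \<alpha>^2 |\<Gamma> - \<Gamma>_J|_F |\<Sigma>|_F |r| / \<sigma>^2.\<close>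

section \<open>Positive semidefinite bilinear forms\<close>

definition bilin :: "nat \<Rightarrow> (nat \<Rightarrow> nat \<Rightarrow> real) \<Rightarrow> (nat \<Rightarrow> real) \<Rightarrow> (nat \<Rightarrow> real) \<Rightarrow> real" where
  "bilin n s u v = (\<Sum>i<n. \<Sum>j<n. s i j * u i * v j)"

definition psd_form :: "nat \<Rightarrow> (nat \<Rightarrow> nat \<Rightarrow> real) \<Rightarrow> bool" where
  "psd_form n s \<longleftrightarrow> (\<forall>u. 0 \<le> bilin n s u u)"

definition sym_form :: "nat \<Rightarrow> (nat \<Rightarrow> nat \<Rightarrow> real) \<Rightarrow> bool" where
  "sym_form n s \<longleftrightarrow> (\<forall>i<n. \<forall>j<n. s i j = s j i)"

lemma bilin_add_left: "bilin n s (\<lambda>i. u i + t * w i) v = bilin n s u v + t * bilin n s w v"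
  by (simp add: bilin_def algebra_simps sum.distrib sum_distrib_left)

lemma bilin_add_right: "bilin n s u (\<lambda>j. v j + t * w j) = bilin n s u v + t * bilin n s u w"
  by (simp add: bilin_def algebra_simps sum.distrib sum_distrib_left)

lemma bilin_commute:
  assumes "sym_form n s"
  shows "bilin n s u v = bilin n s v u"
proof -
  have "bilin n s u v = (\<Sum>j<n. \<Sum>i<n. s i j * u i * v j)"
    unfolding bilin_def by (rule sum.swap)
  also have "\<dots> = bilin n s v u"
    unfolding bilin_def using assms by (intro sum.cong refl) (auto simp: sym_form_def ac_simps)
  finally show ?thesis .
qed

lemma bilin_unit_left:
  assumes "p < n"
  shows "bilin n s (\<lambda>i. if i = p then 1 else 0) v = (\<Sum>j<n. s p j * v j)"
proof -
  have "bilin n s (\<lambda>i. if i = p then 1 else 0) v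
      = (\<Sum>i<n. if i = p then (\<Sum>j<n. s i j * v j) else 0)"
    unfolding bilin_def by (intro sum.cong refl) auto
  then show ?thesis using assms by simp
qed

lemma quadratic_nonneg_imp_discriminant:
  fixes a b c :: real
  assumes nonneg: "\<And>t. 0 \<le> a + 2 * t * b + t\<^sup>2 * c" and "0 \<le> c"
  shows "b\<^sup>2 \<le> a * c"
proof (cases "c = 0")
  case True
  have "b = 0"
  proof (rule ccontr)
    assume "b \<noteq> 0"
    have "0 \<le> a + 2 * (- (a + 1) / (2 * b)) * b" using nonneg[of "- (a + 1) / (2 * b)"] True by simp
    also have "\<dots> = -1" using \<open>b \<noteq> 0\<close> by (simp add: field_simps)
    finally show False by simp
  qed
  then show ?thesis using True by simp
next
  case False
  then have "c > 0" using \<open>0 \<le> c\<close> by simp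
  have "0 \<le> a + 2 * (- b / c) * b + (- b / c)\<^sup>2 * c" by (rule nonneg)
  also have "\<dots> = a - b\<^sup>2 / c" using \<open>c > 0\<close> by (simp add: field_simps power2_eq_square)
  finally show ?thesis using \<open>c > 0\<close> by (simp add: field_simps)
qed

lemma psd_form_diag_nonneg:
  assumes "psd_form n s" "p < n"
  shows "0 \<le> s p p"
proof -
  have "0 \<le> bilin n s (\<lambda>i. if i = p then 1 else 0) (\<lambda>i. if i = p then 1 else 0)"
    using assms(1) by (simp add: psd_form_def)
  then show ?thesis using assms(2) by (simp add: bilin_unit_left if_distrib cong: if_cong)
qed

lemma psd_form_Cauchy_Schwarz:
  assumes "psd_form n s" "sym_form n s"
  shows "(bilin n s u v)\<^sup>2 \<le> bilin n s u u * bilin n s v v"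
proof (rule quadratic_nonneg_imp_discriminant)
  fix t
  have "0 \<le> bilin n s (\<lambda>i. u i + t * v i) (\<lambda>i. u i + t * v i)"
    using assms(1) by (simp add: psd_form_def)
  also have "\<dots> = bilin n s u u + 2 * t * bilin n s u v + t\<^sup>2 * bilin n s v v"
    unfolding bilin_add_left bilin_add_right bilin_commute[OF assms(2), of v u]
    by (simp add: algebra_simps power2_eq_square)
  finally show "0 \<le> bilin n s u u + 2 * t * bilin n s u v + t\<^sup>2 * bilin n s v v" .
qed (use assms(1) in \<open>simp add: psd_form_def\<close>)

lemma psd_form_zero_diag_imp_zero_row:
  assumes psd: "psd_form n s" and sym: "sym_form n s" and "p < n" "s p p = 0" "j < n"
  shows "s p j = 0"
proof -
  let ?e = "\<lambda>i. if i = p then 1 else (0::real)"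
  have "(bilin n s ?e (s p))\<^sup>2 \<le> bilin n s ?e ?e * bilin n s (s p) (s p)"
    by (rule psd_form_Cauchy_Schwarz[OF psd sym])
  then have "(\<Sum>i<n. s p i * s p i)\<^sup>2 \<le> 0"
    using \<open>p < n\<close> \<open>s p p = 0\<close> by (simp add: bilin_unit_left if_distrib cong: if_cong)
  then have "(\<Sum>i<n. s p i * s p i) = 0" by simp
  then show ?thesis using \<open>j < n\<close> by (simp add: sum_nonneg_eq_0_iff)
qed

text \<open>The value of the new form at u is the value of s at u + t e_p for the
  minimizing t.\<close>
lemma psd_form_Schur_complement:
  assumes psd: "psd_form n s" and sym: "sym_form n s" and p: "p < n" "0 < s p p"
  shows "psd_form n (\<lambda>i j. s i j - s i p * s j p / s p p)"
  unfolding psd_form_def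
proof
  fix u
  let ?e = "\<lambda>i. if i = p then 1 else (0::real)"
  define \<beta> where "\<beta> = (\<Sum>j<n. s p j * u j)"
  define t where "t = - \<beta> / s p p"
  have col: "(\<Sum>i<n. s i p * u i) = \<beta>"
    unfolding \<beta>_def using sym p(1) by (intro sum.cong refl) (simp add: sym_form_def)
  have "0 \<le> bilin n s (\<lambda>i. u i + t * ?e i) (\<lambda>i. u i + t * ?e i)"
    using psd by (simp add: psd_form_def)
  also have "\<dots> = bilin n s u u + 2 * t * \<beta> + t * t * s p p"
    unfolding bilin_add_left bilin_add_right bilin_commute[OF sym, of u ?e] bilin_unit_left[OF p(1)]
    using p(1) by (simp add: \<beta>_def algebra_simps if_distrib cong: if_cong)
  also have "\<dots> = bilin n s u u - \<beta> * \<beta> / s p p"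
    unfolding t_def using p(2) by (simp add: field_simps)
  also have "\<beta> * \<beta> / s p p = (\<Sum>i<n. \<Sum>j<n. s i p * s j p / s p p * u i * u j)"
    unfolding col[symmetric] sum_product sum_divide_distrib by (simp add: algebra_simps)
  also have "bilin n s u u - \<dots> = bilin n (\<lambda>i j. s i j - s i p * s j p / s p p) u u"
    by (simp add: bilin_def sum_subtractf left_diff_distrib)
  finally show "0 \<le> bilin n (\<lambda>i j. s i j - s i p * s j p / s p p) u u" .
qed

definition vanishes_outside_block :: "nat \<Rightarrow> nat \<Rightarrow> (nat \<Rightarrow> nat \<Rightarrow> real) \<Rightarrow> bool" where
  "vanishes_outside_block k n s \<longleftrightarrow> (\<forall>i<n. \<forall>j<n. k \<le> i \<or> k \<le> j \<longrightarrow> s i j = 0)"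

lemma vanishes_outside_block_zero_pivot:
  assumes psd: "psd_form n s" and sym: "sym_form n s" and k: "k < n" "s k k = 0"
    and supp: "vanishes_outside_block (Suc k) n s"
  shows "vanishes_outside_block k n s"
  unfolding vanishes_outside_block_def
proof (intro allI impI)
  fix i j assume ij: "i < n" "j < n" "k \<le> i \<or> k \<le> j"
  show "s i j = 0"
  proof (cases "i = k \<or> j = k")
    case True
    have "s k i = 0" "s k j = 0" using psd_form_zero_diag_imp_zero_row[OF psd sym k] ij by auto
    moreover have "s i k = s k i" using sym ij(1) k(1) unfolding sym_form_def by blast
    ultimately show ?thesis using True by auto
  next
    case False
    then show ?thesis using supp ij unfolding vanishes_outside_block_def by (auto simp: Suc_le_eq)
  qed
qed

lemma vanishes_outside_block_Schur_complement:
  assumes sym: "sym_form n s" and k: "k < n" "0 < s k k"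
    and supp: "vanishes_outside_block (Suc k) n s"
  shows "vanishes_outside_block k n (\<lambda>i j. s i j - s i k * s j k / s k k)"
  unfolding vanishes_outside_block_def
proof (intro allI impI)
  fix i j assume ij: "i < n" "j < n" "k \<le> i \<or> k \<le> j"
  show "s i j - s i k * s j k / s k k = 0"
  proof (cases "i = k \<or> j = k")
    case True
    have "s j k = s k j" using sym ij(2) k(1) unfolding sym_form_def by blast
    then show ?thesis using True k(2) by auto
  next
    case False
    then have "Suc k \<le> i \<or> Suc k \<le> j" using ij by auto
    then show ?thesis using supp ij k(1) unfolding vanishes_outside_block_def by auto
  qed
qed

text \<open>Symmetric elimination, one pivot at a time: a zero pivot forces a zero row, and
  a positive pivot is split off as a rank-one term, leaving its Schur complement.\<close>
lemma psd_form_block_sum_of_rank_one: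
  assumes "k \<le> n" "psd_form n s" "sym_form n s" "vanishes_outside_block k n s"
  shows "\<exists>(m::nat) w. \<forall>i<n. \<forall>j<n. s i j = (\<Sum>l<m. w l i * w l j)"
  using assms
proof (induction k arbitrary: s)
  case 0
  show ?case
    by (intro exI[of _ "0::nat"] exI[of _ "\<lambda>_ _. 0::real"])
      (use 0 in \<open>auto simp: vanishes_outside_block_def\<close>)
next
  case (Suc k)
  then have k: "k < n" by simp
  note psd = Suc.prems(2) and sym = Suc.prems(3) and supp = Suc.prems(4)
  show ?case
  proof (cases "s k k = 0")
    case True
    show ?thesis
      using Suc.IH[OF less_imp_le[OF k] psd sym]
        vanishes_outside_block_zero_pivot[OF psd sym k True supp] by blast
  next
    case False
    then have pivot: "0 < s k k" using psd_form_diag_nonneg[OF psd k] by simp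
    define s' where "s' = (\<lambda>i j. s i j - s i k * s j k / s k k)"
    have sym': "sym_form n s'"
      using sym unfolding s'_def sym_form_def by (metis mult.commute)
    obtain m :: nat and w where w: "\<forall>i<n. \<forall>j<n. s' i j = (\<Sum>l<m. w l i * w l j)"
      using Suc.IH[OF less_imp_le[OF k] _ sym'] psd_form_Schur_complement[OF psd sym k pivot]
        vanishes_outside_block_Schur_complement[OF sym k pivot supp]
      unfolding s'_def by blast
    define w' where "w' l i = (if l = m then s i k / sqrt (s k k) else w l i)" for l i
    have "s i j = (\<Sum>l<Suc m. w' l i * w' l j)" if "i < n" "j < n" for i j
    proof -
      have "s' i j = (\<Sum>l<m. w l i * w l j)" using w that by blast
      then show ?thesis using pivot unfolding w'_def s'_def by (simp add: power2_eq_square[symmetric])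
    qed
    then show ?thesis by (intro exI[of _ "Suc m"] exI[of _ w']) auto
  qed
qed

lemma psd_form_sum_of_rank_one:
  assumes "psd_form n s" "sym_form n s"
  shows "\<exists>(m::nat) w. \<forall>i<n. \<forall>j<n. s i j = (\<Sum>l<m. w l i * w l j)"
  using assms by (intro psd_form_block_sum_of_rank_one[of n]) (auto simp: vanishes_outside_block_def)

section \<open>Quadratic forms of matrices\<close>

lemma scalar_prod_as_sum: "x \<bullet> y = (\<Sum>i<dim_vec y. x $ i * y $ i)"
  unfolding scalar_prod_def by (simp add: atLeast0LessThan)

lemma index_mult_mat_vec_sum:
  assumes "i < dim_row A" "dim_vec x = dim_col A"
  shows "(A *\<^sub>v x) $ i = (\<Sum>j<dim_col A. A $$ (i, j) * x $ j)"
proof -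
  have "(A *\<^sub>v x) $ i = (\<Sum>j<dim_col A. row A i $ j * x $ j)"
    using assms by (simp add: scalar_prod_as_sum)
  also have "\<dots> = (\<Sum>j<dim_col A. A $$ (i, j) * x $ j)"
    using assms(1) by (intro sum.cong) auto
  finally show ?thesis .
qed

lemma scalar_prod_mult_mat_vec_bilin:
  fixes A :: "real mat"
  assumes A: "A \<in> carrier_mat n n" and x: "x \<in> carrier_vec n" and y: "y \<in> carrier_vec n"
  shows "y \<bullet> (A *\<^sub>v x) = bilin n (\<lambda>i j. A $$ (i, j)) (($) y) (($) x)"
proof -
  have "y \<bullet> (A *\<^sub>v x) = (\<Sum>i<n. y $ i * (A *\<^sub>v x) $ i)"
    unfolding scalar_prod_as_sum using A by simp
  also have "\<dots> = (\<Sum>i<n. y $ i * (\<Sum>j<n. A $$ (i, j) * x $ j))"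
    using A x by (intro sum.cong refl) (simp add: index_mult_mat_vec_sum del: index_mult_mat_vec)
  also have "\<dots> = bilin n (\<lambda>i j. A $$ (i, j)) (($) y) (($) x)"
    unfolding bilin_def by (simp add: sum_distrib_left algebra_simps)
  finally show ?thesis .
qed

lemma smult_mult_mat_vec:
  assumes "dim_vec x = dim_col A"
  shows "(a \<cdot>\<^sub>m A) *\<^sub>v x = a \<cdot>\<^sub>v (A *\<^sub>v x)"
proof (rule eq_vecI)
  fix i assume "i < dim_vec (a \<cdot>\<^sub>v (A *\<^sub>v x))"
  then show "((a \<cdot>\<^sub>m A) *\<^sub>v x) $ i = (a \<cdot>\<^sub>v (A *\<^sub>v x)) $ i"
    using assms
    by (simp add: index_mult_mat_vec_sum sum_distrib_left ac_simps del: index_mult_mat_vec)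
qed simp

lemma transpose_smult_mat: "transpose_mat (a \<cdot>\<^sub>m A) = a \<cdot>\<^sub>m transpose_mat A"
  by (rule eq_matI) auto

lemma psd_mat_imp_psd_form:
  assumes "psd_mat n A"
  shows "psd_form n (\<lambda>i j. A $$ (i, j))"
  unfolding psd_form_def
proof
  fix u
  have A: "A \<in> carrier_mat n n" using assms by (simp add: psd_mat_def)
  have "0 \<le> vec n u \<bullet> (A *\<^sub>v vec n u)" using assms by (simp add: psd_mat_def)
  also have "\<dots> = bilin n (\<lambda>i j. A $$ (i, j)) u u"
    using A by (simp add: scalar_prod_mult_mat_vec_bilin bilin_def)
  finally show "0 \<le> bilin n (\<lambda>i j. A $$ (i, j)) u u" .
qed

lemma psd_mat_imp_sym_form:
  assumes "psd_mat n A"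
  shows "sym_form n (\<lambda>i j. A $$ (i, j))"
  unfolding sym_form_def
proof (intro allI impI)
  fix i j assume ij: "i < n" "j < n"
  have A: "A \<in> carrier_mat n n" and sym: "transpose_mat A = A"
    using assms by (auto simp: psd_mat_def)
  have "A $$ (i, j) = transpose_mat A $$ (i, j)" using sym by simp
  also have "\<dots> = A $$ (j, i)" using A ij by simp
  finally show "A $$ (i, j) = A $$ (j, i)" .
qed

section \<open>Kronecker products\<close>

lemma dim_kron_mat [simp]:
  "dim_row (kron_mat A B) = dim_row A * dim_row B"
  "dim_col (kron_mat A B) = dim_col A * dim_col B"
  by (simp_all add: kron_mat_def)

lemma kron_mat_carrier:
  "A \<in> carrier_mat m n \<Longrightarrow> B \<in> carrier_mat p q \<Longrightarrow> kron_mat A B \<in> carrier_mat (m * p) (n * q)"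
  by auto

lemma block_index_less: "a < m \<Longrightarrow> c < (p::nat) \<Longrightarrow> c + a * p < m * p"
proof -
  assume "a < m" "c < p"
  then have "c + a * p < p + a * p" by simp
  also have "\<dots> = Suc a * p" by simp
  also have "\<dots> \<le> m * p" using \<open>a < m\<close> by (intro mult_right_mono) auto
  finally show ?thesis .
qed

lemma index_kron_mat_div_mod:
  "i < dim_row A * dim_row B \<Longrightarrow> j < dim_col A * dim_col B \<Longrightarrow>
   kron_mat A B $$ (i, j) = A $$ (i div dim_row B, j div dim_col B) * B $$ (i mod dim_row B, j mod dim_col B)"
  by (simp add: kron_mat_def)

lemma index_kron_mat:
  assumes "a < dim_row A" "b < dim_col A" "c < dim_row B" "e < dim_col B"
  shows "kron_mat A B $$ (c + a * dim_row B, e + b * dim_col B) = A $$ (a, b) * B $$ (c, e)"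
  using assms by (simp add: index_kron_mat_div_mod block_index_less)

lemma sum_kron_mat_entries:
  "(\<Sum>i<dim_row A * dim_row B. \<Sum>j<dim_col A * dim_col B. f i j (kron_mat A B $$ (i, j)))
   = (\<Sum>a<dim_row A. \<Sum>c<dim_row B. \<Sum>b<dim_col A. \<Sum>e<dim_col B.
        f (c + a * dim_row B) (e + b * dim_col B) (A $$ (a, b) * B $$ (c, e)))"
  unfolding sum_mult_product by (intro sum.cong refl) (simp add: index_kron_mat)

lemma div_mod_less_of_less_mult:
  fixes i m n :: nat
  assumes "i < m * n"
  shows "i div n < m" "i mod n < n"
proof -
  have "0 < n" using assms by (cases n) auto
  then show "i div n < m" "i mod n < n" using assms by (auto simp: less_mult_imp_div_less)
qed

lemma transpose_kron_mat: "transpose_mat (kron_mat A B) = kron_mat (transpose_mat A) (transpose_mat B)"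
proof (rule eq_matI)
  fix i j assume "i < dim_row (kron_mat (transpose_mat A) (transpose_mat B))"
    and "j < dim_col (kron_mat (transpose_mat A) (transpose_mat B))"
  then have i: "i < dim_col A * dim_col B" and j: "j < dim_row A * dim_row B" by simp_all
  show "transpose_mat (kron_mat A B) $$ (i, j) = kron_mat (transpose_mat A) (transpose_mat B) $$ (i, j)"
    using i j div_mod_less_of_less_mult[OF i] div_mod_less_of_less_mult[OF j]
    by (simp add: index_kron_mat_div_mod)
qed auto

lemma kron_mat_quadratic_form:
  fixes A B :: "real mat"
  assumes A: "A \<in> carrier_mat N N" and B: "B \<in> carrier_mat d d" and x: "x \<in> carrier_vec (N * d)"
  shows "x \<bullet> (kron_mat A B *\<^sub>v x)
    = (\<Sum>a<N. \<Sum>b<N. A $$ (a, b) * (\<Sum>c<d. \<Sum>e<d. B $$ (c, e) * x $ (c + a * d) * x $ (e + b * d)))"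
proof -
  have "x \<bullet> (kron_mat A B *\<^sub>v x)
      = (\<Sum>i<N * d. \<Sum>j<N * d. kron_mat A B $$ (i, j) * x $ i * x $ j)"
    using kron_mat_carrier[OF A B] x by (simp add: scalar_prod_mult_mat_vec_bilin bilin_def)
  also have "\<dots> = (\<Sum>a<N. \<Sum>c<d. \<Sum>b<N. \<Sum>e<d.
      A $$ (a, b) * B $$ (c, e) * x $ (c + a * d) * x $ (e + b * d))"
    using sum_kron_mat_entries[where f = "\<lambda>i j k. k * x $ i * x $ j" and A = A and B = B] A B by simp
  also have "\<dots> = (\<Sum>a<N. \<Sum>b<N. \<Sum>c<d. \<Sum>e<d.
      A $$ (a, b) * B $$ (c, e) * x $ (c + a * d) * x $ (e + b * d))"
    by (intro sum.cong refl sum.swap)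
  also have "\<dots> = (\<Sum>a<N. \<Sum>b<N. A $$ (a, b) * (\<Sum>c<d. \<Sum>e<d. B $$ (c, e) * x $ (c + a * d) * x $ (e + b * d)))"
    by (simp add: sum_distrib_left ac_simps)
  finally show ?thesis .
qed

lemma sum_nested_swap_innermost:
  "(\<Sum>a\<in>A. \<Sum>b\<in>B. \<Sum>l\<in>L. f a b l) = (\<Sum>l\<in>L. \<Sum>a\<in>A. \<Sum>b\<in>B. f a b l)"
proof -
  have "(\<Sum>a\<in>A. \<Sum>b\<in>B. \<Sum>l\<in>L. f a b l) = (\<Sum>a\<in>A. \<Sum>l\<in>L. \<Sum>b\<in>B. f a b l)"
    by (intro sum.cong refl sum.swap)
  also have "\<dots> = (\<Sum>l\<in>L. \<Sum>a\<in>A. \<Sum>b\<in>B. f a b l)"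
    by (rule sum.swap)
  finally show ?thesis .
qed

lemma kron_mat_quadratic_form_rank_one_sum:
  fixes G S :: "real mat" and x :: "real vec"
  assumes G: "G \<in> carrier_mat N N" and S: "S \<in> carrier_mat d d" and x: "x \<in> carrier_vec (N * d)"
    and w: "\<forall>c<d. \<forall>e<d. S $$ (c, e) = (\<Sum>l<m. w l c * w l e)"
  defines "z l a \<equiv> \<Sum>c<d. w l c * x $ (c + a * d)"
  shows "x \<bullet> (kron_mat G S *\<^sub>v x) = (\<Sum>l<m. bilin N (\<lambda>a b. G $$ (a, b)) (z l) (z l))"
proof -
  have inner: "(\<Sum>c<d. \<Sum>e<d. S $$ (c, e) * x $ (c + a * d) * x $ (e + b * d))
      = (\<Sum>l<m. z l a * z l b)" for a b
  proof -
    have "(\<Sum>c<d. \<Sum>e<d. S $$ (c, e) * x $ (c + a * d) * x $ (e + b * d))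
        = (\<Sum>c<d. \<Sum>e<d. \<Sum>l<m. w l c * w l e * x $ (c + a * d) * x $ (e + b * d))"
      using w by (intro sum.cong refl) (simp add: sum_distrib_right)
    also have "\<dots> = (\<Sum>l<m. \<Sum>c<d. \<Sum>e<d. w l c * w l e * x $ (c + a * d) * x $ (e + b * d))"
      by (rule sum_nested_swap_innermost)
    also have "\<dots> = (\<Sum>l<m. \<Sum>c<d. \<Sum>e<d. (w l c * x $ (c + a * d)) * (w l e * x $ (e + b * d)))"
      by (simp add: ac_simps)
    also have "\<dots> = (\<Sum>l<m. z l a * z l b)"
      by (simp add: z_def sum_product)
    finally show ?thesis .
  qed
  have "x \<bullet> (kron_mat G S *\<^sub>v x) = (\<Sum>a<N. \<Sum>b<N. \<Sum>l<m. G $$ (a, b) * z l a * z l b)"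
    unfolding kron_mat_quadratic_form[OF G S x] inner by (simp add: sum_distrib_left ac_simps)
  also have "\<dots> = (\<Sum>l<m. bilin N (\<lambda>a b. G $$ (a, b)) (z l) (z l))"
    unfolding bilin_def by (rule sum_nested_swap_innermost)
  finally show ?thesis .
qed

text \<open>Writing \<Sigma> as a sum of rank-one forms w w^T reduces the quadratic form of
  \<Gamma> \<otimes> \<Sigma> to a sum of quadratic forms of \<Gamma>.\<close>
lemma psd_mat_kron_mat:
  assumes G: "psd_mat N G" and S: "psd_mat d S"
  shows "psd_mat (N * d) (kron_mat G S)"
proof -
  have Gc: "G \<in> carrier_mat N N" and Sc: "S \<in> carrier_mat d d"
    using G S by (auto simp: psd_mat_def)
  obtain m :: nat and w where w: "\<forall>c<d. \<forall>e<d. S $$ (c, e) = (\<Sum>l<m. w l c * w l e)"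
    using psd_form_sum_of_rank_one[OF psd_mat_imp_psd_form[OF S] psd_mat_imp_sym_form[OF S]] by blast
  have "0 \<le> x \<bullet> (kron_mat G S *\<^sub>v x)" if x: "x \<in> carrier_vec (N * d)" for x
    unfolding kron_mat_quadratic_form_rank_one_sum[OF Gc Sc x w]
    using psd_mat_imp_psd_form[OF G] by (intro sum_nonneg) (simp add: psd_form_def)
  moreover have "transpose_mat (kron_mat G S) = kron_mat G S"
    using G S by (simp add: transpose_kron_mat psd_mat_def)
  ultimately show ?thesis
    unfolding psd_mat_def using kron_mat_carrier[OF Gc Sc] by blast
qed

lemma frob_norm_kron_mat: "frob_norm (kron_mat A B) = frob_norm A * frob_norm B"
proof -
  have "(\<Sum>i<dim_row (kron_mat A B). \<Sum>j<dim_col (kron_mat A B). (kron_mat A B $$ (i, j))\<^sup>2)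
      = (\<Sum>a<dim_row A. \<Sum>c<dim_row B. \<Sum>b<dim_col A. \<Sum>e<dim_col B. (A $$ (a, b))\<^sup>2 * (B $$ (c, e))\<^sup>2)"
    using sum_kron_mat_entries[where f = "\<lambda>i j k. k\<^sup>2" and A = A and B = B]
    by (simp add: power_mult_distrib)
  also have "\<dots> = (\<Sum>a<dim_row A. \<Sum>b<dim_col A. \<Sum>c<dim_row B. \<Sum>e<dim_col B. (A $$ (a, b))\<^sup>2 * (B $$ (c, e))\<^sup>2)"
    by (intro sum.cong refl sum.swap)
  also have "\<dots> = (\<Sum>a<dim_row A. \<Sum>b<dim_col A.
      (A $$ (a, b))\<^sup>2 * (\<Sum>c<dim_row B. \<Sum>e<dim_col B. (B $$ (c, e))\<^sup>2))"
    by (simp add: sum_distrib_left)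
  also have "\<dots> = (\<Sum>a<dim_row A. \<Sum>b<dim_col A. (A $$ (a, b))\<^sup>2)
      * (\<Sum>c<dim_row B. \<Sum>e<dim_col B. (B $$ (c, e))\<^sup>2)"
    by (simp add: sum_distrib_right)
  finally show ?thesis unfolding frob_norm_def by (simp add: real_sqrt_mult)
qed

lemma frob_norm_smult: "frob_norm (k \<cdot>\<^sub>m A) = \<bar>k\<bar> * frob_norm A"
  by (simp add: frob_norm_def power_mult_distrib sum_distrib_left[symmetric] real_sqrt_mult)

lemma kron_mat_minus_left:
  assumes "A \<in> carrier_mat m n" "A' \<in> carrier_mat m n"
  shows "kron_mat A B - kron_mat A' B = kron_mat (A - A') B"
proof (rule eq_matI)
  fix i j assume "i < dim_row (kron_mat (A - A') B)" "j < dim_col (kron_mat (A - A') B)"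
  then have i: "i < m * dim_row B" and j: "j < n * dim_col B" using assms by simp_all
  then show "(kron_mat A B - kron_mat A' B) $$ (i, j) = kron_mat (A - A') B $$ (i, j)"
    using assms div_mod_less_of_less_mult[OF i] div_mod_less_of_less_mult[OF j]
    by (simp add: index_kron_mat_div_mod algebra_simps)
qed (use assms in auto)

section \<open>Euclidean and Frobenius norms\<close>

lemma scalar_prod_self_nonneg: "0 \<le> x \<bullet> (x :: real vec)"
  by (simp add: scalar_prod_as_sum sum_nonneg)

lemma scalar_prod_self_pos:
  fixes x :: "real vec"
  assumes x: "x \<in> carrier_vec n" and "x \<noteq> 0\<^sub>v n"
  shows "0 < x \<bullet> x"
proof -
  have "x \<bullet> x \<noteq> 0"
  proof
    assume "x \<bullet> x = 0"
    then have "\<forall>i<n. x $ i * x $ i = 0"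
      using x by (simp add: scalar_prod_as_sum sum_nonneg_eq_0_iff)
    then have "x = 0\<^sub>v n" using x by (intro eq_vecI) auto
    with \<open>x \<noteq> 0\<^sub>v n\<close> show False ..
  qed
  then show ?thesis using scalar_prod_self_nonneg[of x] by simp
qed

lemma vnorm_nonneg: "0 \<le> vnorm x"
  by (simp add: vnorm_def scalar_prod_self_nonneg)

lemma frob_norm_nonneg: "0 \<le> frob_norm A"
  by (simp add: frob_norm_def sum_nonneg)

lemma vnorm_power2: "(vnorm x)\<^sup>2 = x \<bullet> x"
  by (simp add: vnorm_def scalar_prod_self_nonneg)

lemma vnorm_uminus: "vnorm (- x) = vnorm x"
  by (simp add: vnorm_def)

lemma vnorm_le_of_scalar_prod_le:
  fixes x y :: "real vec"
  assumes "x \<bullet> x \<le> c\<^sup>2 * (y \<bullet> y)" "0 \<le> c"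
  shows "vnorm x \<le> c * vnorm y"
proof -
  have "vnorm x \<le> sqrt (c\<^sup>2 * (y \<bullet> y))" unfolding vnorm_def using assms(1) by simp
  then show ?thesis using assms(2) by (simp add: vnorm_def real_sqrt_mult)
qed

lemma scalar_prod_Cauchy_Schwarz:
  fixes x y :: "real vec"
  assumes "x \<in> carrier_vec n" "y \<in> carrier_vec n"
  shows "(x \<bullet> y)\<^sup>2 \<le> (x \<bullet> x) * (y \<bullet> y)"
  using assms Cauchy_Schwarz_ineq_sum[of "\<lambda>i. x $ i" "\<lambda>i. y $ i" "{..<n}"]
  by (simp add: scalar_prod_as_sum power2_eq_square)

lemma abs_scalar_prod_le_vnorm:
  fixes x y :: "real vec"
  assumes "x \<in> carrier_vec n" "y \<in> carrier_vec n"
  shows "\<bar>x \<bullet> y\<bar> \<le> vnorm x * vnorm y"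
proof -
  have "sqrt ((x \<bullet> y)\<^sup>2) \<le> sqrt ((x \<bullet> x) * (y \<bullet> y))"
    using scalar_prod_Cauchy_Schwarz[OF assms] by (rule real_sqrt_le_mono)
  then show ?thesis by (simp add: vnorm_def real_sqrt_mult)
qed

lemma vnorm_add_le:
  fixes x y :: "real vec"
  assumes x: "x \<in> carrier_vec n" and y: "y \<in> carrier_vec n"
  shows "vnorm (x + y) \<le> vnorm x + vnorm y"
proof (rule power2_le_imp_le)
  have "(vnorm (x + y))\<^sup>2 = x \<bullet> x + 2 * (x \<bullet> y) + y \<bullet> y"
    unfolding vnorm_power2 using x y
    by (simp add: scalar_prod_add_distrib[of _ n] add_scalar_prod_distrib[of _ n] comm_scalar_prod[of y n x])
  also have "\<dots> \<le> (vnorm x)\<^sup>2 + 2 * (vnorm x * vnorm y) + (vnorm y)\<^sup>2"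
    using abs_scalar_prod_le_vnorm[OF x y] by (simp add: vnorm_power2)
  also have "\<dots> = (vnorm x + vnorm y)\<^sup>2" by (simp add: power2_sum)
  finally show "(vnorm (x + y))\<^sup>2 \<le> (vnorm x + vnorm y)\<^sup>2" .
qed (simp add: vnorm_nonneg)

lemma vnorm_mult_mat_vec_le:
  fixes A :: "real mat"
  assumes A: "A \<in> carrier_mat nr nc" and x: "x \<in> carrier_vec nc"
  shows "vnorm (A *\<^sub>v x) \<le> frob_norm A * vnorm x"
proof (rule vnorm_le_of_scalar_prod_le)
  have "(A *\<^sub>v x) \<bullet> (A *\<^sub>v x) = (\<Sum>i<nr. (\<Sum>j<nc. A $$ (i, j) * x $ j)\<^sup>2)"
    unfolding scalar_prod_as_sum using A x
    by (intro sum.cong) (simp_all add: index_mult_mat_vec_sum power2_eq_square del: index_mult_mat_vec)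
  also have "\<dots> \<le> (\<Sum>i<nr. (\<Sum>j<nc. (A $$ (i, j))\<^sup>2) * (\<Sum>j<nc. (x $ j)\<^sup>2))"
    by (intro sum_mono Cauchy_Schwarz_ineq_sum)
  also have "\<dots> = (frob_norm A)\<^sup>2 * (x \<bullet> x)"
    using A x by (simp add: frob_norm_def scalar_prod_as_sum sum_distrib_right power2_eq_square sum_nonneg)
  finally show "(A *\<^sub>v x) \<bullet> (A *\<^sub>v x) \<le> (frob_norm A)\<^sup>2 * (x \<bullet> x)" .
qed (rule frob_norm_nonneg)

lemma quadratic_form_le_frob_norm:
  fixes A :: "real mat"
  assumes A: "A \<in> carrier_mat n n" and x: "x \<in> carrier_vec n"
  shows "x \<bullet> (A *\<^sub>v x) \<le> frob_norm A * (x \<bullet> x)"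
proof -
  have "x \<bullet> (A *\<^sub>v x) \<le> vnorm x * vnorm (A *\<^sub>v x)"
    using abs_scalar_prod_le_vnorm[of x n "A *\<^sub>v x"] A x by simp
  also have "\<dots> \<le> vnorm x * (frob_norm A * vnorm x)"
    by (intro mult_left_mono vnorm_mult_mat_vec_le[OF A x] vnorm_nonneg)
  also have "\<dots> = frob_norm A * (x \<bullet> x)" by (simp add: vnorm_power2[symmetric] power2_eq_square)
  finally show ?thesis .
qed

section \<open>Coercive and positive semidefinite matrices\<close>

lemma psd_mat_Cauchy_Schwarz:
  fixes A :: "real mat"
  assumes A: "psd_mat n A" and x: "x \<in> carrier_vec n" and y: "y \<in> carrier_vec n"
  shows "(y \<bullet> (A *\<^sub>v x))\<^sup>2 \<le> (x \<bullet> (A *\<^sub>v x)) * (y \<bullet> (A *\<^sub>v y))"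
proof -
  have Ac: "A \<in> carrier_mat n n" using A by (simp add: psd_mat_def)
  show ?thesis
    using psd_form_Cauchy_Schwarz[OF psd_mat_imp_psd_form[OF A] psd_mat_imp_sym_form[OF A],
        of "($) y" "($) x"] Ac x y
    by (simp add: scalar_prod_mult_mat_vec_bilin mult.commute)
qed

text \<open>|A e|^2 = e \<bullet> A (A e) by symmetry; then apply the Cauchy-Schwarz inequality
  of the form of A.\<close>
lemma psd_mat_image_le:
  fixes A :: "real mat"
  assumes A: "psd_mat n A" and M: "0 \<le> M"
    and upper: "\<forall>x\<in>carrier_vec n. x \<bullet> (A *\<^sub>v x) \<le> M * (x \<bullet> x)"
    and e: "e \<in> carrier_vec n"
  shows "(A *\<^sub>v e) \<bullet> (A *\<^sub>v e) \<le> M * (e \<bullet> (A *\<^sub>v e))"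
proof -
  have Ac: "A \<in> carrier_mat n n" and sym: "transpose_mat A = A"
    using A by (auto simp: psd_mat_def)
  define y where "y = A *\<^sub>v e"
  have y: "y \<in> carrier_vec n" unfolding y_def using Ac e by simp
  have eAe: "0 \<le> e \<bullet> (A *\<^sub>v e)" using A e by (simp add: psd_mat_def)
  have yy: "y \<bullet> y = e \<bullet> (A *\<^sub>v y)"
    using transpose_vec_mult_scalar[OF Ac y e] sym unfolding y_def by simp
  show ?thesis
  proof (cases "y \<bullet> y = 0")
    case True
    then show ?thesis using M eAe unfolding y_def by simp
  next
    case False
    then have pos: "0 < y \<bullet> y" using scalar_prod_self_nonneg[of y] by simp
    have "(y \<bullet> y)\<^sup>2 \<le> (y \<bullet> (A *\<^sub>v y)) * (e \<bullet> (A *\<^sub>v e))"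
      unfolding yy by (rule psd_mat_Cauchy_Schwarz[OF A y e])
    also have "\<dots> \<le> (M * (y \<bullet> y)) * (e \<bullet> (A *\<^sub>v e))"
      using upper y eAe by (intro mult_right_mono) auto
    finally have "(y \<bullet> y) * (y \<bullet> y) \<le> (M * (e \<bullet> (A *\<^sub>v e))) * (y \<bullet> y)"
      by (simp add: power2_eq_square ac_simps)
    then show ?thesis using pos unfolding y_def by simp
  qed
qed

lemma coercive_imp_vnorm_le:
  fixes A :: "real mat"
  assumes A: "A \<in> carrier_mat n n"
    and lower: "\<forall>x\<in>carrier_vec n. c * (x \<bullet> x) \<le> x \<bullet> (A *\<^sub>v x)"
    and x: "x \<in> carrier_vec n"
  shows "c * vnorm x \<le> vnorm (A *\<^sub>v x)"
proof (cases "vnorm x = 0")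
  case False
  then have pos: "0 < vnorm x" using vnorm_nonneg[of x] by simp
  have "c * vnorm x * vnorm x = c * (x \<bullet> x)" by (simp add: vnorm_power2[symmetric] power2_eq_square)
  also have "\<dots> \<le> x \<bullet> (A *\<^sub>v x)" using lower x by blast
  also have "\<dots> \<le> vnorm (A *\<^sub>v x) * vnorm x"
    using abs_scalar_prod_le_vnorm[of x n "A *\<^sub>v x"] A x by (simp add: mult.commute)
  finally show ?thesis using pos by simp
qed (simp add: vnorm_nonneg)

lemma coercive_imp_det_nonzero:
  fixes A :: "real mat"
  assumes A: "A \<in> carrier_mat n n" and c: "0 < c"
    and lower: "\<forall>x\<in>carrier_vec n. c * (x \<bullet> x) \<le> x \<bullet> (A *\<^sub>v x)"
  shows "det A \<noteq> 0"
proof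
  assume "det A = 0"
  then obtain v where v: "v \<in> carrier_vec n" "v \<noteq> 0\<^sub>v n" "A *\<^sub>v v = 0\<^sub>v n"
    using det_0_iff_vec_prod_zero[OF A] by auto
  have "c * (v \<bullet> v) \<le> 0" using lower v by fastforce
  then show False using scalar_prod_self_pos[OF v(1,2)] c by (simp add: mult_le_0_iff)
qed

lemma mat_inv_of_det_nonzero:
  fixes A :: "real mat"
  assumes A: "A \<in> carrier_mat n n" and "det A \<noteq> 0"
  shows "mat_inv A \<in> carrier_mat n n" "A * mat_inv A = 1\<^sub>m n" "mat_inv A * A = 1\<^sub>m n"
proof -
  have "A \<in> Units (ring_mat TYPE(real) n ())"
    by (rule det_non_zero_imp_unit[OF A \<open>det A \<noteq> 0\<close>])
  then obtain B where "mat_inverse A = Some B"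
    using mat_inverse(1)[OF A, where b = "()"] by (cases "mat_inverse A") auto
  then show "mat_inv A \<in> carrier_mat n n" "A * mat_inv A = 1\<^sub>m n" "mat_inv A * A = 1\<^sub>m n"
    using mat_inverse(2)[OF A] by (auto simp: mat_inv_def)
qed

lemma mult_mat_vec_uminus: "dim_vec v = dim_col A \<Longrightarrow> A *\<^sub>v (- v) = - (A *\<^sub>v v)"
  for A :: "'a :: comm_ring mat"
  by (rule eq_vecI) auto

lemma mult_mat_vec_neg_mat_inv:
  fixes A :: "real mat"
  assumes A: "A \<in> carrier_mat n n" and "det A \<noteq> 0" and r: "r \<in> carrier_vec n"
  shows "A *\<^sub>v (- (mat_inv A *\<^sub>v r)) = - r"
proof -
  note inv = mat_inv_of_det_nonzero[OF A \<open>det A \<noteq> 0\<close>]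
  have "A *\<^sub>v (mat_inv A *\<^sub>v r) = r"
    using inv A r by (simp flip: assoc_mult_mat_vec)
  then show ?thesis
    using inv A r by (simp add: mult_mat_vec_uminus)
qed

text \<open>From x = B^-1 (B x) and psd_mat_image_le:
  |x|^2 \<le> |B^-1|_F^2 |B x|^2 \<le> |B^-1|_F^2 |B|_F (x \<bullet> B x).\<close>
lemma psd_mat_coercive_of_det_nonzero:
  fixes B :: "real mat"
  assumes B: "psd_mat n B" and "det B \<noteq> 0"
  shows "\<exists>c>0. \<forall>x\<in>carrier_vec n. c * (x \<bullet> x) \<le> x \<bullet> (B *\<^sub>v x)"
proof -
  have Bc: "B \<in> carrier_mat n n" using B by (simp add: psd_mat_def)
  note inv = mat_inv_of_det_nonzero[OF Bc \<open>det B \<noteq> 0\<close>]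
  define k where "k = (frob_norm (mat_inv B))\<^sup>2 * frob_norm B + 1"
  have k: "0 < k" unfolding k_def by (simp add: frob_norm_nonneg add_nonneg_pos)
  have "x \<bullet> x \<le> k * (x \<bullet> (B *\<^sub>v x))" if x: "x \<in> carrier_vec n" for x
  proof -
    have Bx: "B *\<^sub>v x \<in> carrier_vec n" using Bc x by simp
    have xBx: "0 \<le> x \<bullet> (B *\<^sub>v x)" using B x by (simp add: psd_mat_def)
    have "x = mat_inv B *\<^sub>v (B *\<^sub>v x)"
      using inv Bc x by (simp flip: assoc_mult_mat_vec)
    then have "vnorm x \<le> frob_norm (mat_inv B) * vnorm (B *\<^sub>v x)"
      using vnorm_mult_mat_vec_le[OF inv(1) Bx] by simp
    then have "x \<bullet> x \<le> (frob_norm (mat_inv B))\<^sup>2 * ((B *\<^sub>v x) \<bullet> (B *\<^sub>v x))"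
      using vnorm_nonneg[of x]
      by (metis power_mono power_mult_distrib vnorm_power2)
    also have "\<dots> \<le> (frob_norm (mat_inv B))\<^sup>2 * (frob_norm B * (x \<bullet> (B *\<^sub>v x)))"
      using psd_mat_image_le[OF B frob_norm_nonneg _ x] quadratic_form_le_frob_norm[OF Bc]
      by (intro mult_left_mono) auto
    also have "\<dots> \<le> k * (x \<bullet> (B *\<^sub>v x))"
      unfolding k_def using xBx by (simp add: algebra_simps)
    finally show ?thesis .
  qed
  then show ?thesis using k by (intro exI[of _ "1 / k"]) (auto simp: field_simps)
qed

lemma quadratic_form_smult_plus_identity:
  fixes K :: "real mat"
  assumes K: "K \<in> carrier_mat n n" and x: "x \<in> carrier_vec n"
  shows "x \<bullet> ((a \<cdot>\<^sub>m K + b \<cdot>\<^sub>m 1\<^sub>m n) *\<^sub>v x) = a * (x \<bullet> (K *\<^sub>v x)) + b * (x \<bullet> x)"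
proof -
  have "(a \<cdot>\<^sub>m K + b \<cdot>\<^sub>m 1\<^sub>m n) *\<^sub>v x = a \<cdot>\<^sub>v (K *\<^sub>v x) + b \<cdot>\<^sub>v x"
    using K x by (simp add: add_mult_distrib_mat_vec[of _ n n] smult_mult_mat_vec)
  then show ?thesis using K x by (simp add: scalar_prod_add_distrib[of _ n])
qed

lemma perturbed_solution_error:
  fixes A B :: "real mat"
  assumes A: "A \<in> carrier_mat n n" and B: "B \<in> carrier_mat n n"
    and lower: "\<forall>x\<in>carrier_vec n. c * (x \<bullet> x) \<le> x \<bullet> (A *\<^sub>v x)"
    and y: "y \<in> carrier_vec n" "B *\<^sub>v y = - r" and z: "z \<in> carrier_vec n" "A *\<^sub>v z = - r"
  shows "c * vnorm (y - z) \<le> frob_norm (A - B) * vnorm y"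
proof -
  have "A *\<^sub>v (y - z) = (A - B) *\<^sub>v y"
    using A B y z by (simp add: mult_minus_distrib_mat_vec minus_mult_distrib_mat_vec)
  moreover have "A - B \<in> carrier_mat n n" by (rule minus_carrier_mat[OF B])
  ultimately show ?thesis
    using coercive_imp_vnorm_le[OF A lower, of "y - z"] vnorm_mult_mat_vec_le[of "A - B" n n y] y z
    by (metis minus_carrier_vec order_trans)
qed

lemma solution_of_coercive:
  fixes A :: "real mat"
  assumes A: "A \<in> carrier_mat n n" and c: "0 < c"
    and lower: "\<forall>x\<in>carrier_vec n. c * (x \<bullet> x) \<le> x \<bullet> (A *\<^sub>v x)" and r: "r \<in> carrier_vec n"
  shows "- (mat_inv A *\<^sub>v r) \<in> carrier_vec n" "A *\<^sub>v (- (mat_inv A *\<^sub>v r)) = - r"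
    "c * vnorm (- (mat_inv A *\<^sub>v r)) \<le> vnorm r"
proof -
  have det: "det A \<noteq> 0" by (rule coercive_imp_det_nonzero[OF A c lower])
  show y: "- (mat_inv A *\<^sub>v r) \<in> carrier_vec n"
    using mat_inv_of_det_nonzero(1)[OF A det] r by simp
  show sol: "A *\<^sub>v (- (mat_inv A *\<^sub>v r)) = - r" by (rule mult_mat_vec_neg_mat_inv[OF A det r])
  show "c * vnorm (- (mat_inv A *\<^sub>v r)) \<le> vnorm r"
    using coercive_imp_vnorm_le[OF A lower y] unfolding sol vnorm_uminus .
qed

section \<open>Extreme eigenvalues of symmetric matrices\<close>

lemma eigenvalues_finite:
  fixes A :: "'a :: field mat"
  assumes "A \<in> carrier_mat n n"
  shows "finite {l. eigenvalue A l}"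
proof -
  have "char_poly A \<noteq> 0" using degree_monic_char_poly[OF assms] by auto
  then show ?thesis
    using poly_roots_finite[of "char_poly A"] by (simp add: eigenvalue_root_char_poly[OF assms])
qed

lemma eigenvalue_ge_of_coercive:
  fixes A :: "real mat"
  assumes A: "A \<in> carrier_mat n n"
    and lower: "\<forall>x\<in>carrier_vec n. c * (x \<bullet> x) \<le> x \<bullet> (A *\<^sub>v x)"
    and "eigenvalue A l"
  shows "c \<le> l"
proof -
  obtain v where v: "v \<in> carrier_vec n" "v \<noteq> 0\<^sub>v n" "A *\<^sub>v v = l \<cdot>\<^sub>v v"
    using assms(3) A unfolding eigenvalue_def eigenvector_def by auto
  have "c * (v \<bullet> v) \<le> l * (v \<bullet> v)" using lower v by fastforce
  then show ?thesis using scalar_prod_self_pos[OF v(1,2)] by simp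
qed

lemma eigenvalue_of_uminus_mat:
  fixes A :: "real mat"
  assumes A: "A \<in> carrier_mat n n" and "eigenvalue (- A) l"
  shows "eigenvalue A (- l)"
proof -
  obtain v where v: "v \<in> carrier_vec n" "v \<noteq> 0\<^sub>v n" "(- A) *\<^sub>v v = l \<cdot>\<^sub>v v"
    using assms unfolding eigenvalue_def eigenvector_def by auto
  have "A *\<^sub>v v = (- l) \<cdot>\<^sub>v v"
  proof (rule eq_vecI)
    fix i assume "i < dim_vec ((- l) \<cdot>\<^sub>v v)"
    moreover have "((- A) *\<^sub>v v) $ i = (l \<cdot>\<^sub>v v) $ i" using v(3) by simp
    ultimately show "(A *\<^sub>v v) $ i = ((- l) \<cdot>\<^sub>v v) $ i" using A v(1) by simp
  qed (use A v(1) in simp)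
  then show ?thesis using v A unfolding eigenvalue_def eigenvector_def by auto
qed

definition rayleigh_sup :: "nat \<Rightarrow> real mat \<Rightarrow> real" where
  "rayleigh_sup n A = Sup {x \<bullet> (A *\<^sub>v x) / (x \<bullet> x) | x. x \<in> carrier_vec n \<and> x \<noteq> 0\<^sub>v n}"

lemma quadratic_form_le_rayleigh_sup:
  fixes A :: "real mat"
  assumes A: "A \<in> carrier_mat n n" and x: "x \<in> carrier_vec n"
  shows "x \<bullet> (A *\<^sub>v x) \<le> rayleigh_sup n A * (x \<bullet> x)"
proof (cases "x = 0\<^sub>v n")
  case False
  have "bdd_above {x \<bullet> (A *\<^sub>v x) / (x \<bullet> x) | x. x \<in> carrier_vec n \<and> x \<noteq> 0\<^sub>v n}"
    unfolding bdd_above_def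
  proof (intro exI[of _ "frob_norm A"] ballI, clarify)
    fix y :: "real vec" assume y: "y \<in> carrier_vec n" "y \<noteq> 0\<^sub>v n"
    then show "y \<bullet> (A *\<^sub>v y) / (y \<bullet> y) \<le> frob_norm A"
      using quadratic_form_le_frob_norm[OF A y(1)] scalar_prod_self_pos[OF y] by (simp add: divide_le_eq)
  qed
  moreover have "x \<bullet> (A *\<^sub>v x) / (x \<bullet> x) \<in> {x \<bullet> (A *\<^sub>v x) / (x \<bullet> x) | x. x \<in> carrier_vec n \<and> x \<noteq> 0\<^sub>v n}"
    using x False by blast
  ultimately have "x \<bullet> (A *\<^sub>v x) / (x \<bullet> x) \<le> rayleigh_sup n A"
    unfolding rayleigh_sup_def by (simp add: cSup_upper)
  then show ?thesis using scalar_prod_self_pos[OF x False] by (simp add: divide_le_eq)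
qed (use A in simp)

lemma rayleigh_sup_le:
  fixes A :: "real mat"
  assumes n: "0 < n" and bound: "\<forall>x\<in>carrier_vec n. x \<bullet> (A *\<^sub>v x) \<le> b * (x \<bullet> x)"
  shows "rayleigh_sup n A \<le> b"
  unfolding rayleigh_sup_def
proof (rule cSup_least)
  define u :: "real vec" where "u = unit_vec n 0"
  have "u $ 0 \<noteq> 0\<^sub>v n $ 0" unfolding u_def using n by simp
  then have "u \<noteq> 0\<^sub>v n" by metis
  moreover have "u \<in> carrier_vec n" unfolding u_def by simp
  ultimately have "u \<bullet> (A *\<^sub>v u) / (u \<bullet> u) \<in> {x \<bullet> (A *\<^sub>v x) / (x \<bullet> x) | x. x \<in> carrier_vec n \<and> x \<noteq> 0\<^sub>v n}"
    by blast
  then show "{x \<bullet> (A *\<^sub>v x) / (x \<bullet> x) | x. x \<in> carrier_vec n \<and> x \<noteq> 0\<^sub>v n} \<noteq> {}" by blast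
next
  fix r assume "r \<in> {x \<bullet> (A *\<^sub>v x) / (x \<bullet> x) | x. x \<in> carrier_vec n \<and> x \<noteq> 0\<^sub>v n}"
  then obtain x where x: "x \<in> carrier_vec n" "x \<noteq> 0\<^sub>v n" and r: "r = x \<bullet> (A *\<^sub>v x) / (x \<bullet> x)"
    by blast
  show "r \<le> b" unfolding r using bound x scalar_prod_self_pos[OF x] by (simp add: divide_le_eq)
qed

text \<open>The matrix \<rho> I - A is positive semidefinite; if it were invertible, it would be
  coercive with some c > 0, and \<rho> - c would be a smaller bound for the Rayleigh quotient.\<close>
lemma rayleigh_sup_eigenvalue:
  fixes A :: "real mat"
  assumes A: "A \<in> carrier_mat n n" and sym: "transpose_mat A = A" and n: "0 < n"
  shows "eigenvalue A (rayleigh_sup n A)"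
proof -
  define \<rho> where "\<rho> = rayleigh_sup n A"
  define B where "B = (-1) \<cdot>\<^sub>m A + \<rho> \<cdot>\<^sub>m 1\<^sub>m n"
  have B_quad: "x \<bullet> (B *\<^sub>v x) = \<rho> * (x \<bullet> x) - x \<bullet> (A *\<^sub>v x)" if "x \<in> carrier_vec n" for x
    unfolding B_def using quadratic_form_smult_plus_identity[OF A that] by simp
  have "psd_mat n B"
    unfolding psd_mat_def using A sym B_quad quadratic_form_le_rayleigh_sup[OF A]
    by (simp add: B_def transpose_add[of _ n n] transpose_smult_mat \<rho>_def)
  have "det B = 0"
  proof (rule ccontr)
    assume "det B \<noteq> 0"
    then obtain c where c: "0 < c" "\<forall>x\<in>carrier_vec n. c * (x \<bullet> x) \<le> x \<bullet> (B *\<^sub>v x)"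
      using psd_mat_coercive_of_det_nonzero[OF \<open>psd_mat n B\<close>] by blast
    have "\<forall>x\<in>carrier_vec n. x \<bullet> (A *\<^sub>v x) \<le> (\<rho> - c) * (x \<bullet> x)"
      using c(2) B_quad by (auto simp: algebra_simps)
    then have "\<rho> \<le> \<rho> - c" unfolding \<rho>_def by (rule rayleigh_sup_le[OF n])
    then show False using c(1) by simp
  qed
  moreover have "char_matrix A \<rho> = (-1) \<cdot>\<^sub>m B"
    unfolding char_matrix_def B_def using A by (intro eq_matI) auto
  ultimately have "eigenvalue A \<rho>" using A by (simp add: eigenvalue_det)
  then show ?thesis unfolding \<rho>_def .
qed

lemma rayleigh_le_Max_eigenvalue:
  fixes A :: "real mat"
  assumes A: "A \<in> carrier_mat n n" and sym: "transpose_mat A = A" and n: "0 < n"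
    and x: "x \<in> carrier_vec n"
  shows "x \<bullet> (A *\<^sub>v x) \<le> Max {l. eigenvalue A l} * (x \<bullet> x)"
proof -
  have "rayleigh_sup n A \<le> Max {l. eigenvalue A l}"
    using rayleigh_sup_eigenvalue[OF A sym n] eigenvalues_finite[OF A] by simp
  then show ?thesis
    using quadratic_form_le_rayleigh_sup[OF A x] scalar_prod_self_nonneg[of x]
    by (meson mult_right_mono order_trans)
qed

lemma Min_eigenvalue_le_rayleigh:
  fixes A :: "real mat"
  assumes A: "A \<in> carrier_mat n n" and sym: "transpose_mat A = A" and n: "0 < n"
    and x: "x \<in> carrier_vec n"
  shows "Min {l. eigenvalue A l} * (x \<bullet> x) \<le> x \<bullet> (A *\<^sub>v x)"
proof -
  have A': "- A \<in> carrier_mat n n" "transpose_mat (- A) = - A"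
    using A sym by (auto simp: transpose_uminus)
  have "Min {l. eigenvalue A l} \<le> - rayleigh_sup n (- A)"
    using eigenvalue_of_uminus_mat[OF A rayleigh_sup_eigenvalue[OF A' n]] eigenvalues_finite[OF A]
    by simp
  moreover have "- rayleigh_sup n (- A) * (x \<bullet> x) \<le> x \<bullet> (A *\<^sub>v x)"
    using quadratic_form_le_rayleigh_sup[OF A'(1) x] x A by simp
  ultimately show ?thesis
    using scalar_prod_self_nonneg[of x] by (meson mult_right_mono order_trans)
qed

lemma symmetric_coercive_eigenvalue_bounds:
  fixes A :: "real mat"
  assumes A: "A \<in> carrier_mat n n" and sym: "transpose_mat A = A" and n: "0 < n"
    and lower: "\<forall>x\<in>carrier_vec n. c * (x \<bullet> x) \<le> x \<bullet> (A *\<^sub>v x)"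
  defines "m \<equiv> Min {l. eigenvalue A l}" and "M \<equiv> Max {l. eigenvalue A l}"
  shows "c \<le> m" "m \<le> M"
    "\<forall>x\<in>carrier_vec n. m * (x \<bullet> x) \<le> x \<bullet> (A *\<^sub>v x)"
    "\<forall>x\<in>carrier_vec n. x \<bullet> (A *\<^sub>v x) \<le> M * (x \<bullet> x)"
proof -
  have fin: "finite {l. eigenvalue A l}" and ne: "{l. eigenvalue A l} \<noteq> {}"
    using eigenvalues_finite[OF A] rayleigh_sup_eigenvalue[OF A sym n] by auto
  have "eigenvalue A m" using Min_in[OF fin ne] unfolding m_def by simp
  then show "c \<le> m" by (rule eigenvalue_ge_of_coercive[OF A lower])
  show "m \<le> M" using Min_in[OF fin ne] fin unfolding m_def M_def by simp
  show "\<forall>x\<in>carrier_vec n. m * (x \<bullet> x) \<le> x \<bullet> (A *\<^sub>v x)"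
    unfolding m_def using Min_eigenvalue_le_rayleigh[OF A sym n] by blast
  show "\<forall>x\<in>carrier_vec n. x \<bullet> (A *\<^sub>v x) \<le> M * (x \<bullet> x)"
    unfolding M_def using rayleigh_le_Max_eigenvalue[OF A sym n] by blast
qed

section \<open>Gradient descent\<close>

lemma gd_iter_carrier:
  "A \<in> carrier_mat n n \<Longrightarrow> r \<in> carrier_vec n \<Longrightarrow> gd_iter A r \<eta> k \<in> carrier_vec n"
  by (induction k) auto

lemma gd_iter_Suc_error:
  fixes A :: "real mat" and \<eta> :: real and k :: nat
  assumes A: "A \<in> carrier_mat n n" and r: "r \<in> carrier_vec n" and y: "y \<in> carrier_vec n"
    and sol: "A *\<^sub>v y = - r"
  defines "e \<equiv> gd_iter A r \<eta> k - y"
  shows "gd_iter A r \<eta> (Suc k) - y = e - \<eta> \<cdot>\<^sub>v (A *\<^sub>v e)"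
proof -
  define s where "s = gd_iter A r \<eta> k"
  have s: "s \<in> carrier_vec n" unfolding s_def by (rule gd_iter_carrier[OF A r])
  have "A *\<^sub>v e = A *\<^sub>v s - A *\<^sub>v y"
    unfolding e_def s_def[symmetric] by (rule mult_minus_distrib_mat_vec[OF A s y])
  also have "\<dots> = A *\<^sub>v s + r" using A s r unfolding sol by (intro eq_vecI) auto
  finally have "A *\<^sub>v e = A *\<^sub>v s + r" .
  then show ?thesis
    using A s r y unfolding e_def s_def[symmetric] by (intro eq_vecI) (auto simp: s_def)
qed

lemma scalar_prod_minus_smult_self:
  fixes e w :: "real vec"
  assumes "e \<in> carrier_vec n" "w \<in> carrier_vec n"
  shows "(e - t \<cdot>\<^sub>v w) \<bullet> (e - t \<cdot>\<^sub>v w) = e \<bullet> e - 2 * t * (e \<bullet> w) + t\<^sup>2 * (w \<bullet> w)"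
  using assms
  by (simp add: scalar_prod_as_sum power2_eq_square algebra_simps sum_subtractf sum.distrib sum_distrib_left)

lemma gradient_step_contraction:
  fixes A :: "real mat"
  assumes A: "A \<in> carrier_mat n n" and sym: "transpose_mat A = A" and m: "0 < m" "m \<le> M"
    and lower: "\<forall>x\<in>carrier_vec n. m * (x \<bullet> x) \<le> x \<bullet> (A *\<^sub>v x)"
    and upper: "\<forall>x\<in>carrier_vec n. x \<bullet> (A *\<^sub>v x) \<le> M * (x \<bullet> x)"
    and e: "e \<in> carrier_vec n"
  shows "(e - (1 / M) \<cdot>\<^sub>v (A *\<^sub>v e)) \<bullet> (e - (1 / M) \<cdot>\<^sub>v (A *\<^sub>v e)) \<le> (1 - m / M) * (e \<bullet> e)"
proof -
  have M: "0 < M" using m by simp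
  have "0 \<le> x \<bullet> (A *\<^sub>v x)" if "x \<in> carrier_vec n" for x
    using lower that m scalar_prod_self_nonneg[of x]
    by (meson mult_nonneg_nonneg order.strict_implies_order order_trans)
  then have "psd_mat n A" unfolding psd_mat_def using A sym by blast
  have "(e - (1 / M) \<cdot>\<^sub>v (A *\<^sub>v e)) \<bullet> (e - (1 / M) \<cdot>\<^sub>v (A *\<^sub>v e))
      = e \<bullet> e - 2 * (1 / M) * (e \<bullet> (A *\<^sub>v e)) + (1 / M)\<^sup>2 * ((A *\<^sub>v e) \<bullet> (A *\<^sub>v e))"
    using A e by (intro scalar_prod_minus_smult_self) auto
  also have "\<dots> \<le> e \<bullet> e - 2 * (1 / M) * (e \<bullet> (A *\<^sub>v e)) + (1 / M)\<^sup>2 * (M * (e \<bullet> (A *\<^sub>v e)))"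
    using psd_mat_image_le[OF \<open>psd_mat n A\<close> _ upper e] M by simp
  also have "\<dots> = e \<bullet> e - (e \<bullet> (A *\<^sub>v e)) / M"
    using M by (simp add: field_simps power2_eq_square)
  also have "\<dots> \<le> e \<bullet> e - m * (e \<bullet> e) / M"
    using lower e M by (simp add: divide_right_mono)
  also have "\<dots> = (1 - m / M) * (e \<bullet> e)" by (simp add: algebra_simps)
  finally show ?thesis .
qed

lemma gd_iter_error_contraction:
  fixes A :: "real mat"
  assumes A: "A \<in> carrier_mat n n" and sym: "transpose_mat A = A" and m: "0 < m" "m \<le> M"
    and lower: "\<forall>x\<in>carrier_vec n. m * (x \<bullet> x) \<le> x \<bullet> (A *\<^sub>v x)"
    and upper: "\<forall>x\<in>carrier_vec n. x \<bullet> (A *\<^sub>v x) \<le> M * (x \<bullet> x)"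
    and r: "r \<in> carrier_vec n" and y: "y \<in> carrier_vec n" and sol: "A *\<^sub>v y = - r"
  shows "(gd_iter A r (1 / M) k - y) \<bullet> (gd_iter A r (1 / M) k - y) \<le> (1 - m / M) ^ k * (y \<bullet> y)"
proof (induction k)
  case 0
  have "gd_iter A r (1 / M) 0 - y = - y" using r y by auto
  then show ?case using y by simp
next
  case (Suc k)
  define e where "e = gd_iter A r (1 / M) k - y"
  have e: "e \<in> carrier_vec n" unfolding e_def using gd_iter_carrier[OF A r] y by simp
  have "(gd_iter A r (1 / M) (Suc k) - y) \<bullet> (gd_iter A r (1 / M) (Suc k) - y)
      \<le> (1 - m / M) * (e \<bullet> e)"
    unfolding gd_iter_Suc_error[OF A r y sol] e_def[symmetric]
    by (rule gradient_step_contraction[OF A sym m lower upper e])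
  also have "\<dots> \<le> (1 - m / M) * ((1 - m / M) ^ k * (y \<bullet> y))"
    using Suc.IH m unfolding e_def by (intro mult_left_mono) auto
  finally show ?case by simp
qed

lemma contraction_power_log_steps:
  fixes m M \<epsilon> :: real
  assumes m: "0 < m" "m \<le> M" and \<epsilon>: "0 < \<epsilon>" "\<epsilon> < 1"
  shows "(1 - m / M) ^ nat \<lceil>2 * (M / m) * ln (1 / \<epsilon>)\<rceil> \<le> \<epsilon>\<^sup>2"
proof -
  define K where "K = nat \<lceil>2 * (M / m) * ln (1 / \<epsilon>)\<rceil>"
  have M: "0 < M" using m by simp
  have K: "2 * ln (1 / \<epsilon>) \<le> real K * (m / M)"
  proof -
    have "2 * (M / m) * ln (1 / \<epsilon>) \<le> real K" unfolding K_def by linarith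
    then have "2 * (M / m) * ln (1 / \<epsilon>) * (m / M) \<le> real K * (m / M)"
      using m M by (intro mult_right_mono) auto
    then show ?thesis using m M by (simp add: field_simps)
  qed
  have "(1 - m / M) ^ K \<le> exp (- (m / M)) ^ K"
    using m M exp_ge_add_one_self[of "- (m / M)"] by (intro power_mono) (auto simp: field_simps)
  also have "\<dots> = exp (- (real K * (m / M)))" by (simp add: exp_of_nat_mult[symmetric])
  also have "\<dots> \<le> exp (- (2 * ln (1 / \<epsilon>)))" using K by simp
  also have "\<dots> = \<epsilon>\<^sup>2"
    using \<epsilon> by (simp add: ln_div exp_double)
  finally show ?thesis unfolding K_def .
qed

lemma gd_iter_error_log_steps:
  fixes A :: "real mat"
  assumes A: "A \<in> carrier_mat n n" and sym: "transpose_mat A = A" and m: "0 < m" "m \<le> M"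
    and lower: "\<forall>x\<in>carrier_vec n. m * (x \<bullet> x) \<le> x \<bullet> (A *\<^sub>v x)"
    and upper: "\<forall>x\<in>carrier_vec n. x \<bullet> (A *\<^sub>v x) \<le> M * (x \<bullet> x)"
    and r: "r \<in> carrier_vec n" and y: "y \<in> carrier_vec n" and sol: "A *\<^sub>v y = - r"
    and \<epsilon>: "0 < \<epsilon>" "\<epsilon> < 1"
  shows "vnorm (gd_iter A r (1 / M) (nat \<lceil>2 * (M / m) * ln (1 / \<epsilon>)\<rceil>) - y) \<le> \<epsilon> * vnorm y"
proof (rule vnorm_le_of_scalar_prod_le)
  let ?K = "nat \<lceil>2 * (M / m) * ln (1 / \<epsilon>)\<rceil>"
  have "(gd_iter A r (1 / M) ?K - y) \<bullet> (gd_iter A r (1 / M) ?K - y) \<le> (1 - m / M) ^ ?K * (y \<bullet> y)"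
    by (rule gd_iter_error_contraction[OF A sym m lower upper r y sol])
  also have "\<dots> \<le> \<epsilon>\<^sup>2 * (y \<bullet> y)"
    by (intro mult_right_mono contraction_power_log_steps[OF m \<epsilon>] scalar_prod_self_nonneg)
  finally show "(gd_iter A r (1 / M) ?K - y) \<bullet> (gd_iter A r (1 / M) ?K - y) \<le> \<epsilon>\<^sup>2 * (y \<bullet> y)" .
qed (use \<epsilon> in simp)

section \<open>Gradient descent on a perturbed system\<close>

lemma gd_iter_perturbed_error:
  fixes A B :: "real mat"
  assumes A: "A \<in> carrier_mat n n" and B: "B \<in> carrier_mat n n" and sym: "transpose_mat B = B"
    and n: "0 < n" and c: "0 < c"
    and lower_A: "\<forall>x\<in>carrier_vec n. c * (x \<bullet> x) \<le> x \<bullet> (A *\<^sub>v x)"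
    and lower_B: "\<forall>x\<in>carrier_vec n. c * (x \<bullet> x) \<le> x \<bullet> (B *\<^sub>v x)"
    and r: "r \<in> carrier_vec n" and \<epsilon>: "0 < \<epsilon>" "\<epsilon> < 1"
  defines "m \<equiv> Min {l. eigenvalue B l}" and "M \<equiv> Max {l. eigenvalue B l}"
  shows "vnorm (gd_iter B r (1 / M) (nat \<lceil>2 * (M / m) * ln (1 / \<epsilon>)\<rceil>) - - (mat_inv A *\<^sub>v r))
    \<le> vnorm r * \<epsilon> / c + frob_norm (A - B) * vnorm r / c\<^sup>2"
proof -
  note bounds = symmetric_coercive_eigenvalue_bounds[OF B sym n lower_B, folded m_def M_def]
  have m: "0 < m" "m \<le> M" using bounds(1,2) c by auto
  define y where "y = - (mat_inv B *\<^sub>v r)"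
  define z where "z = - (mat_inv A *\<^sub>v r)"
  note y = solution_of_coercive[OF B c lower_B r, folded y_def]
  note z = solution_of_coercive[OF A c lower_A r, folded z_def]
  define s where "s = gd_iter B r (1 / M) (nat \<lceil>2 * (M / m) * ln (1 / \<epsilon>)\<rceil>)"
  have s: "s \<in> carrier_vec n" unfolding s_def by (rule gd_iter_carrier[OF B r])
  have "s - z = (s - y) + (y - z)" using s y(1) z(1) by (intro eq_vecI) auto
  then have "vnorm (s - z) \<le> vnorm (s - y) + vnorm (y - z)"
    using vnorm_add_le[of "s - y" n "y - z"] s y(1) z(1) by simp
  also have "\<dots> \<le> \<epsilon> * vnorm y + frob_norm (A - B) * vnorm y / c"
  proof (rule add_mono)
    show "vnorm (s - y) \<le> \<epsilon> * vnorm y"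
      unfolding s_def by (rule gd_iter_error_log_steps[OF B sym m bounds(3,4) r y(1,2) \<epsilon>])
    show "vnorm (y - z) \<le> frob_norm (A - B) * vnorm y / c"
      using perturbed_solution_error[OF A B lower_A y(1,2) z(1,2)] c
      by (simp add: pos_le_divide_eq mult.commute)
  qed
  also have "\<dots> \<le> \<epsilon> * (vnorm r / c) + frob_norm (A - B) * (vnorm r / c) / c"
    using y(3) c \<epsilon> frob_norm_nonneg[of "A - B"]
    by (intro add_mono mult_left_mono divide_right_mono) (simp_all add: pos_le_divide_eq ac_simps)
  also have "\<dots> = vnorm r * \<epsilon> / c + frob_norm (A - B) * vnorm r / c\<^sup>2"
    by (simp add: power2_eq_square)
  finally show ?thesis unfolding s_def z_def .
qed

lemma gd_solves_perturbed_system: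
  fixes A B :: "real mat"
  assumes A: "A \<in> carrier_mat n n" and B: "B \<in> carrier_mat n n" and sym: "transpose_mat B = B"
    and n: "0 < n" and c: "0 < c"
    and lower_A: "\<forall>x\<in>carrier_vec n. c * (x \<bullet> x) \<le> x \<bullet> (A *\<^sub>v x)"
    and lower_B: "\<forall>x\<in>carrier_vec n. c * (x \<bullet> x) \<le> x \<bullet> (B *\<^sub>v x)"
    and r: "r \<in> carrier_vec n" and \<epsilon>: "0 < \<epsilon>" "\<epsilon> < 1"
  shows "\<exists>\<eta> K. \<eta> > 0 \<and> real K \<le> 2 * (1 + cond_num B * ln (1 / \<epsilon>)) \<and>
    vnorm (gd_iter B r \<eta> K - - (mat_inv A *\<^sub>v r))
      \<le> vnorm r * \<epsilon> / c + frob_norm (A - B) * vnorm r / c\<^sup>2"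
proof -
  define m where "m = Min {l. eigenvalue B l}"
  define M where "M = Max {l. eigenvalue B l}"
  define K where "K = nat \<lceil>2 * (M / m) * ln (1 / \<epsilon>)\<rceil>"
  have m: "0 < m" "m \<le> M"
    using symmetric_coercive_eigenvalue_bounds(1,2)[OF B sym n lower_B] c unfolding m_def M_def by auto
  then have "0 \<le> 2 * (M / m) * ln (1 / \<epsilon>)" using \<epsilon> by simp
  then have "real K \<le> 2 * (M / m) * ln (1 / \<epsilon>) + 1" unfolding K_def by linarith
  then have K: "real K \<le> 2 * (1 + cond_num B * ln (1 / \<epsilon>))"
    unfolding cond_num_def m_def[symmetric] M_def[symmetric] by simp
  have err: "vnorm (gd_iter B r (1 / M) K - - (mat_inv A *\<^sub>v r))
      \<le> vnorm r * \<epsilon> / c + frob_norm (A - B) * vnorm r / c\<^sup>2"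
    unfolding K_def m_def M_def by (rule gd_iter_perturbed_error[OF A B sym n c lower_A lower_B r \<epsilon>])
  show ?thesis by (intro exI[of _ "1 / M"] exI[of _ K] conjI K err) (use m in simp)
qed

section \<open>The banded Kronecker system\<close>

lemma coercive_smult_plus_identity:
  fixes K :: "real mat"
  assumes "psd_mat n K" "0 \<le> a" "x \<in> carrier_vec n"
  shows "b * (x \<bullet> x) \<le> x \<bullet> ((a \<cdot>\<^sub>m K + b \<cdot>\<^sub>m 1\<^sub>m n) *\<^sub>v x)"
  using assms quadratic_form_smult_plus_identity[of K n x a b] by (simp add: psd_mat_def)

lemma transpose_smult_plus_identity:
  "K \<in> carrier_mat n n \<Longrightarrow> transpose_mat K = K \<Longrightarrow>
   transpose_mat (a \<cdot>\<^sub>m K + b \<cdot>\<^sub>m 1\<^sub>m n) = a \<cdot>\<^sub>m K + b \<cdot>\<^sub>m 1\<^sub>m n"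
  by (simp add: transpose_add[of _ n n] transpose_smult_mat)

lemma smult_plus_identity_diff:
  fixes K K' :: "real mat"
  shows "K \<in> carrier_mat n n \<Longrightarrow> K' \<in> carrier_mat n n \<Longrightarrow>
   (a \<cdot>\<^sub>m K + b \<cdot>\<^sub>m 1\<^sub>m n) - (a \<cdot>\<^sub>m K' + b \<cdot>\<^sub>m 1\<^sub>m n) = a \<cdot>\<^sub>m (K - K')"
  by (intro eq_matI) (auto simp: right_diff_distrib)

lemma band_mat_carrier: "G \<in> carrier_mat N N \<Longrightarrow> band_mat G J \<in> carrier_mat N N"
  by (simp add: band_mat_def)

lemma frob_norm_minus_band_mat:
  assumes "G \<in> carrier_mat N N"
  shows "frob_norm (G - band_mat G J)
    = sqrt (\<Sum>i<N. \<Sum>j<N. if \<bar>int i - int j\<bar> \<ge> J then (G $$ (i, j))\<^sup>2 else 0)"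
  unfolding frob_norm_def using assms by (intro arg_cong[where f = sqrt] sum.cong refl) (auto simp: band_mat_def)

lemma frob_norm_banded_kron_diff:
  fixes \<Gamma> \<Sigma> :: "real mat"
  assumes \<Gamma>: "\<Gamma> \<in> carrier_mat N N" and \<Sigma>: "\<Sigma> \<in> carrier_mat d d" and a: "0 \<le> a" "a \<le> 1"
  shows "frob_norm ((a \<cdot>\<^sub>m kron_mat \<Gamma> \<Sigma> + b \<cdot>\<^sub>m 1\<^sub>m (d * N))
      - (a \<cdot>\<^sub>m kron_mat (band_mat \<Gamma> J) \<Sigma> + b \<cdot>\<^sub>m 1\<^sub>m (d * N)))
    \<le> frob_norm \<Sigma> * sqrt (\<Sum>i<N. \<Sum>j<N. if \<bar>int i - int j\<bar> \<ge> J then (\<Gamma> $$ (i, j))\<^sup>2 else 0)"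
    (is "?lhs \<le> frob_norm \<Sigma> * sqrt ?T")
proof -
  have K: "kron_mat \<Gamma> \<Sigma> \<in> carrier_mat (d * N) (d * N)"
    and Kb: "kron_mat (band_mat \<Gamma> J) \<Sigma> \<in> carrier_mat (d * N) (d * N)"
    using kron_mat_carrier[OF \<Gamma> \<Sigma>] kron_mat_carrier[OF band_mat_carrier[OF \<Gamma>] \<Sigma>]
    by (simp_all add: mult.commute)
  have "?lhs = a * (sqrt ?T * frob_norm \<Sigma>)"
    unfolding smult_plus_identity_diff[OF K Kb] kron_mat_minus_left[OF \<Gamma> band_mat_carrier[OF \<Gamma>]]
    using a by (simp add: frob_norm_smult frob_norm_kron_mat frob_norm_minus_band_mat[OF \<Gamma>])
  also have "\<dots> \<le> frob_norm \<Sigma> * sqrt ?T"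
    using a frob_norm_nonneg[of \<Sigma>]
    by (simp add: mult_left_le_one_le sum_nonneg mult.commute)
  finally show ?thesis .
qed

lemma gd_banded_kron_error:
  fixes \<Gamma> \<Sigma> :: "real mat"
  assumes N: "0 < N" and d: "0 < d" and \<Gamma>: "psd_mat N \<Gamma>" and \<Sigma>: "psd_mat d \<Sigma>"
    and \<Gamma>b: "psd_mat N (band_mat \<Gamma> J)" and r: "r \<in> carrier_vec (d * N)"
    and \<alpha>: "\<alpha>\<^sup>2 \<le> 1" and \<sigma>: "\<sigma> \<noteq> 0" and \<epsilon>: "0 < \<epsilon>" "\<epsilon> < 1"
  shows "\<exists>\<eta> K. \<eta> > 0 \<and>
    real K \<le> 2 * (1 + cond_num (\<alpha>\<^sup>2 \<cdot>\<^sub>m kron_mat (band_mat \<Gamma> J) \<Sigma> + \<sigma>\<^sup>2 \<cdot>\<^sub>m 1\<^sub>m (d * N)) * ln (1 / \<epsilon>)) \<and>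
    vnorm (gd_iter (\<alpha>\<^sup>2 \<cdot>\<^sub>m kron_mat (band_mat \<Gamma> J) \<Sigma> + \<sigma>\<^sup>2 \<cdot>\<^sub>m 1\<^sub>m (d * N)) r \<eta> K
      - - (mat_inv (\<alpha>\<^sup>2 \<cdot>\<^sub>m kron_mat \<Gamma> \<Sigma> + \<sigma>\<^sup>2 \<cdot>\<^sub>m 1\<^sub>m (d * N)) *\<^sub>v r))
    \<le> vnorm r * \<epsilon> / \<sigma>\<^sup>2 + frob_norm \<Sigma> * vnorm r / \<sigma> ^ 4 *
      sqrt (\<Sum>i<N. \<Sum>j<N. if \<bar>int i - int j\<bar> \<ge> J then (\<Gamma> $$ (i, j))\<^sup>2 else 0)"
proof -
  define n where "n = d * N"
  define T where "T = (\<Sum>i<N. \<Sum>j<N. if \<bar>int i - int j\<bar> \<ge> J then (\<Gamma> $$ (i, j))\<^sup>2 else 0)"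
  define A where "A = \<alpha>\<^sup>2 \<cdot>\<^sub>m kron_mat \<Gamma> \<Sigma> + \<sigma>\<^sup>2 \<cdot>\<^sub>m 1\<^sub>m n"
  define B where "B = \<alpha>\<^sup>2 \<cdot>\<^sub>m kron_mat (band_mat \<Gamma> J) \<Sigma> + \<sigma>\<^sup>2 \<cdot>\<^sub>m 1\<^sub>m n"
  have K: "psd_mat n (kron_mat \<Gamma> \<Sigma>)" and Kb: "psd_mat n (kron_mat (band_mat \<Gamma> J) \<Sigma>)"
    using psd_mat_kron_mat[OF \<Gamma> \<Sigma>] psd_mat_kron_mat[OF \<Gamma>b \<Sigma>] unfolding n_def by (simp_all add: mult.commute)
  have frob: "frob_norm (A - B) \<le> frob_norm \<Sigma> * sqrt T"
    using \<Gamma> \<Sigma> \<alpha> unfolding A_def B_def n_def T_def psd_mat_def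
    by (intro frob_norm_banded_kron_diff) auto
  obtain \<eta> k where "\<eta> > 0" and k: "real k \<le> 2 * (1 + cond_num B * ln (1 / \<epsilon>))"
    and err: "vnorm (gd_iter B r \<eta> k - - (mat_inv A *\<^sub>v r))
      \<le> vnorm r * \<epsilon> / \<sigma>\<^sup>2 + frob_norm (A - B) * vnorm r / (\<sigma>\<^sup>2)\<^sup>2"
    using gd_solves_perturbed_system[of A n B "\<sigma>\<^sup>2" r \<epsilon>] K Kb \<sigma> r \<epsilon>
      transpose_smult_plus_identity[of "kron_mat (band_mat \<Gamma> J) \<Sigma>" n "\<alpha>\<^sup>2" "\<sigma>\<^sup>2"]
      coercive_smult_plus_identity
    unfolding A_def B_def n_def psd_mat_def by (auto simp: N d)
  have "frob_norm (A - B) * vnorm r / (\<sigma>\<^sup>2)\<^sup>2 \<le> frob_norm \<Sigma> * sqrt T * vnorm r / (\<sigma>\<^sup>2)\<^sup>2"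
    using frob vnorm_nonneg[of r] by (intro divide_right_mono mult_right_mono) auto
  also have "\<dots> = frob_norm \<Sigma> * vnorm r / \<sigma> ^ 4 * sqrt T"
    by (simp add: ac_simps flip: power_mult)
  finally show ?thesis
    using \<open>\<eta> > 0\<close> k err unfolding A_def B_def n_def T_def by (intro exI[of _ \<eta>] exI[of _ k]) auto
qed

theorem lemma1:
  "\<exists>C > 0. \<forall>(N::nat) (d::nat) (\<Gamma>::real mat) (\<Sigma>::real mat) (\<mu>::real vec) (t::real)
      (v::real vec) (\<epsilon>::real) (J::int).
     N > 0 \<longrightarrow> d > 0 \<longrightarrow> psd_mat N \<Gamma> \<longrightarrow> psd_mat d \<Sigma> \<longrightarrow>
     \<mu> \<in> carrier_vec (d * N) \<longrightarrow> v \<in> carrier_vec (d * N) \<longrightarrow> t > 0 \<longrightarrow>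
     0 < \<epsilon> \<longrightarrow> \<epsilon> < 1 \<longrightarrow> J < int N \<longrightarrow> psd_mat N (band_mat \<Gamma> J) \<longrightarrow>
     (let \<alpha> = exp (- t / 2);
          \<sigma> = sqrt (1 - exp (- t));
          r = v - \<alpha> \<cdot>\<^sub>v \<mu>;
          score = - (mat_inv (\<alpha>\<^sup>2 \<cdot>\<^sub>m kron_mat \<Gamma> \<Sigma> + \<sigma>\<^sup>2 \<cdot>\<^sub>m 1\<^sub>m (d * N)) *\<^sub>v r);
          Abar = \<alpha>\<^sup>2 \<cdot>\<^sub>m kron_mat (band_mat \<Gamma> J) \<Sigma> + \<sigma>\<^sup>2 \<cdot>\<^sub>m 1\<^sub>m (d * N);
          \<kappa> = cond_num Abar
      in \<exists>(\<eta>::real) (K::nat). \<eta> > 0 \<and> real K \<le> C * (1 + \<kappa> * ln (1 / \<epsilon>)) \<and>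
           vnorm (gd_iter Abar r \<eta> K - score)
             \<le> vnorm r * \<epsilon> / \<sigma>\<^sup>2
                + frob_norm \<Sigma> * vnorm r / \<sigma> ^ 4 *
                  sqrt (\<Sum>i<N. \<Sum>j<N. if \<bar>int i - int j\<bar> \<ge> J then (\<Gamma> $$ (i, j))\<^sup>2 else 0))"
proof -
  have \<alpha>: "(exp (- (t / 2)))\<^sup>2 \<le> 1" and \<sigma>: "sqrt (1 - exp (- t)) \<noteq> 0" if "0 < t" for t :: real
  proof -
    have "(exp (- (t / 2)))\<^sup>2 = exp (- t)" by (simp add: power2_eq_square flip: exp_add)
    then show "(exp (- (t / 2)))\<^sup>2 \<le> 1" "sqrt (1 - exp (- t)) \<noteq> 0" using that by simp_all
  qed
  show ?thesis
    unfolding Let_def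
    by (rule exI[of _ 2], intro conjI allI impI gd_banded_kron_error) (auto simp: \<alpha> \<sigma>)
qed

end
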